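(* Let $G=(V,E)$ be a tree with $n$ nodes and maximum degree $\Delta$, and let $S_0=\{r\}$. Then, both for random and for adversarial \textsc{RPull}, with high probability all nodes of $V$ are informed within $O\big(\max_{p} D_p+\Delta\log n\big)$ rounds, where the maximum is over all paths $p$ in $G$ and $D_p=\sum_{w\in p} d_w$ is the sum of the degrees of the nodes on $p$.
   Context: Rumor spreading proceeds in synchronous rounds. \textsc{RPull}: in each round, every uninformed node sends a request to a uniformly random neighbor; every informed node $v$ receiving a nonempty set $R_v$ of requests selects exactly one node of $R_v$, which learns the rumor. In adversarial \textsc{RPull} the selected node is chosen by an adaptive adversary; in random \textsc{RPull} it is chosen uniformly at random, independently across nodes and rounds. "With high probability" means with probability at least $1-n^{-c}$ for some constant $c\ge1$. *)

theory Defs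
  imports "HOL-Probability.Probability"
begin

definition graph :: "nat set \<Rightarrow> (nat \<Rightarrow> nat \<Rightarrow> bool) \<Rightarrow> bool" where
  "graph V E \<longleftrightarrow> finite V \<and> (\<forall>u v. E u v \<longrightarrow> u \<in> V \<and> v \<in> V)
     \<and> (\<forall>u v. E u v \<longrightarrow> E v u) \<and> (\<forall>u. \<not> E u u)"

definition is_path :: "nat set \<Rightarrow> (nat \<Rightarrow> nat \<Rightarrow> bool) \<Rightarrow> nat list \<Rightarrow> bool" where
  "is_path V E p \<longleftrightarrow> p \<noteq> [] \<and> distinct p \<and> set p \<subseteq> V
     \<and> (\<forall>i. Suc i < length p \<longrightarrow> E (p ! i) (p ! Suc i))"

definition is_tree :: "nat set \<Rightarrow> (nat \<Rightarrow> nat \<Rightarrow> bool) \<Rightarrow> bool" where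
  "is_tree V E \<longleftrightarrow> graph V E \<and> V \<noteq> {} \<and>
     (\<forall>u\<in>V. \<forall>v\<in>V. \<exists>!p. is_path V E p \<and> hd p = u \<and> last p = v)"

definition nbrs :: "(nat \<Rightarrow> nat \<Rightarrow> bool) \<Rightarrow> nat \<Rightarrow> nat set" where
  "nbrs E u = {v. E u v}"

definition deg :: "(nat \<Rightarrow> nat \<Rightarrow> bool) \<Rightarrow> nat \<Rightarrow> nat" where
  "deg E u = card (nbrs E u)"

definition max_deg :: "nat set \<Rightarrow> (nat \<Rightarrow> nat \<Rightarrow> bool) \<Rightarrow> nat" where
  "max_deg V E = Max (deg E ` V)"

definition max_path_deg :: "nat set \<Rightarrow> (nat \<Rightarrow> nat \<Rightarrow> bool) \<Rightarrow> nat" where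
  "max_path_deg V E = Max {(\<Sum>w\<leftarrow>p. deg E w) | p. is_path V E p}"

definition req :: "nat set \<Rightarrow> nat set \<Rightarrow> (nat \<Rightarrow> nat) \<Rightarrow> nat \<Rightarrow> nat set" where
  "req V S N v = {u \<in> V - S. N u = v}"

definition active :: "nat set \<Rightarrow> nat set \<Rightarrow> (nat \<Rightarrow> nat) \<Rightarrow> nat set" where
  "active V S N = {v \<in> S. req V S N v \<noteq> {}}"

text \<open>A selection rule: given the history of all request functions so far (the last one being
  the current round's), the informed set S and the current requests N, a distribution
  over the set of newly informed nodes.\<close>
type_synonym selrule = "(nat \<Rightarrow> nat) list \<Rightarrow> nat set \<Rightarrow> (nat \<Rightarrow> nat) \<Rightarrow> nat set pmf"

definition random_sel :: "nat set \<Rightarrow> selrule" where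
  "random_sel V h S N =
     map_pmf (\<lambda>f. f ` active V S N)
       (Pi_pmf (active V S N) 0 (\<lambda>v. pmf_of_set (req V S N v)))"

text \<open>Adversarial RPull: an adaptive adversary sees the full history (all requests so far,
  hence all states) and names the node to serve; an invalid choice is replaced by some
  valid one (which is again an admissible adversary choice).\<close>
type_synonym adversary = "(nat \<Rightarrow> nat) list \<Rightarrow> nat \<Rightarrow> nat"

definition adv_pick :: "nat set \<Rightarrow> adversary \<Rightarrow> (nat \<Rightarrow> nat) list \<Rightarrow> nat set \<Rightarrow> (nat \<Rightarrow> nat) \<Rightarrow> nat \<Rightarrow> nat" where
  "adv_pick V adv h S N v =
     (if adv h v \<in> req V S N v then adv h v else (SOME u. u \<in> req V S N v))"

definition adv_sel :: "nat set \<Rightarrow> adversary \<Rightarrow> selrule" where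
  "adv_sel V adv h S N = return_pmf (adv_pick V adv h S N ` active V S N)"

text \<open>One round: every uninformed node requests a uniformly random neighbour (independently);
  then the selection rule determines the newly informed nodes.  State = (informed set, history).\<close>
definition rpull_step :: "nat set \<Rightarrow> (nat \<Rightarrow> nat \<Rightarrow> bool) \<Rightarrow> selrule
     \<Rightarrow> nat set \<times> (nat \<Rightarrow> nat) list \<Rightarrow> (nat set \<times> (nat \<Rightarrow> nat) list) pmf" where
  "rpull_step V E sel st =
     (case st of (S, h) \<Rightarrow>
       Pi_pmf (V - S) 0 (\<lambda>u. pmf_of_set (nbrs E u)) \<bind>
         (\<lambda>N. map_pmf (\<lambda>T. (S \<union> T, h @ [N])) (sel (h @ [N]) S N)))"

definition rpull :: "nat set \<Rightarrow> (nat \<Rightarrow> nat \<Rightarrow> bool) \<Rightarrow> selrule \<Rightarrow> nat \<Rightarrow> nat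
     \<Rightarrow> (nat set \<times> (nat \<Rightarrow> nat) list) pmf" where
  "rpull V E sel r t = ((\<lambda>p. p \<bind> rpull_step V E sel) ^^ t) (return_pmf ({r}, []))"

definition all_informed_prob :: "nat set \<Rightarrow> (nat \<Rightarrow> nat \<Rightarrow> bool) \<Rightarrow> selrule \<Rightarrow> nat \<Rightarrow> nat \<Rightarrow> real" where
  "all_informed_prob V E sel r t = measure_pmf.prob (rpull V E sel r t) {st. V \<subseteq> fst st}"

end

theory Submission imports Defs begin

text \<open>Fix a path \<open>p\<close> from the source to a node \<open>x\<close>, let \<open>p_j\<close> be its last informed node and
  \<open>\<Phi> = |N(p_j) - S| + 3 \<Sum>_{i>j} d(p_i)\<close>.  \<open>\<Phi>\<close> never increases.  In a round where an
  uninformed neighbour of \<open>p_j\<close> other than \<open>p_{j+1}\<close> requests \<open>p_j\<close>, node \<open>p_j\<close> serves some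
  uninformed neighbour and \<open>\<Phi>\<close> drops by 1; otherwise, with probability \<open>1/d(p_{j+1})\<close>,
  \<open>p_{j+1}\<close> is the only neighbour requesting \<open>p_j\<close>, gets served, and \<open>\<Phi>\<close> drops by
  \<open>1 + 2 d(p_{j+1})\<close>.  With \<open>\<lambda> = 1/(2\<Delta>)\<close> the expectation of \<open>exp(\<lambda>\<Phi>)\<close> therefore shrinks by
  a factor \<open>e^{-\<lambda>}\<close> per round, whatever the selection rule.  As \<open>\<Phi>\<close> starts below \<open>3 D_p\<close>,
  Markov's inequality bounds the probability that \<open>x\<close> is uninformed after \<open>t\<close> rounds by
  \<open>exp(\<lambda>(3 D_p - t))\<close>, and a union bound over the nodes finishes the proof.\<close>

lemma exp_neg_le_one_minus_half:
  fixes x :: real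
  assumes "0 \<le> x" "x \<le> 1"
  shows "exp (- x) \<le> 1 - x / 2"
proof -
  have "0 \<le> x * (1 - x)" using assms by simp
  hence "1 \<le> (1 + x) * (1 - x / 2)" by (simp add: algebra_simps)
  also have "\<dots> \<le> exp x * (1 - x / 2)"
    using exp_ge_add_one_self[of x] assms by (intro mult_right_mono) auto
  finally show ?thesis by (simp add: exp_minus field_simps)
qed

lemma average_exp_neg_le:
  fixes lam d :: real
  assumes "0 < lam" "1 \<le> d" "2 * lam * d \<le> 1"
  shows "(exp (- lam * (1 + 2 * d)) + (d - 1)) / d \<le> exp (- lam)"
proof -
  have "exp (- lam * (1 + 2 * d)) = exp (- lam) * exp (- (2 * lam * d))"
    by (simp add: exp_add[symmetric] algebra_simps)
  also have "\<dots> \<le> exp (- lam) * (1 - lam * d)"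
    using exp_neg_le_one_minus_half[of "2 * lam * d"] assms by (intro mult_left_mono) auto
  finally have bound: "exp (- lam * (1 + 2 * d)) \<le> exp (- lam) * (1 - lam * d)" .
  have "0 \<le> lam * (1 - lam * d)" using assms by simp
  hence "d - 1 \<le> (1 - lam) * (d - 1 + lam * d)" by (simp add: algebra_simps)
  also have "\<dots> \<le> exp (- lam) * (d - 1 + lam * d)"
    using exp_ge_add_one_self[of "- lam"] assms by (intro mult_right_mono) auto
  finally show ?thesis using bound assms by (simp add: field_simps)
qed

lemma exp_decay_le_inverse_square:
  fixes D \<Delta> n t :: real
  assumes "1 \<le> \<Delta>" "0 \<le> D" "1 \<le> n" "4 * (D + \<Delta> * ln n) \<le> t"
  shows "exp ((3 * D - t) / (2 * \<Delta>)) \<le> 1 / n ^ 2"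
proof -
  have "(3 * D - t) / (2 * \<Delta>) \<le> (- 4 * \<Delta> * ln n) / (2 * \<Delta>)"
    using assms by (intro divide_right_mono) auto
  also have "\<dots> = - 2 * ln n" using assms(1) by simp
  finally have "exp ((3 * D - t) / (2 * \<Delta>)) \<le> exp (- 2 * ln n)" by simp
  also have "\<dots> = n powr (- 2)" using assms(3) by (simp add: powr_def)
  also have "\<dots> = 1 / n ^ 2" using assms(3) by (simp add: powr_minus_divide powr_numeral)
  finally show ?thesis .
qed

lemma funpow_bind_pmf_invariant:
  assumes "st \<in> set_pmf (((\<lambda>M. bind_pmf M step) ^^ t) (return_pmf start))"
    and "\<And>st st'. I st \<Longrightarrow> st' \<in> set_pmf (step st) \<Longrightarrow> I st'" and "I start"
  shows "I st"
  using assms(1) by (induction t arbitrary: st) (use assms(2,3) in auto)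

lemma nn_integral_funpow_bind_pmf_le:
  fixes step :: "'s \<Rightarrow> 's pmf" and F :: "'s \<Rightarrow> ennreal"
  assumes inv: "\<And>st st'. I st \<Longrightarrow> st' \<in> set_pmf (step st) \<Longrightarrow> I st'" and start_inv: "I start"
    and bound: "\<And>st. I st \<Longrightarrow> (\<integral>\<^sup>+st'. F st' \<partial>step st) \<le> a * F st"
  shows "(\<integral>\<^sup>+st. F st \<partial>((\<lambda>M. bind_pmf M step) ^^ t) (return_pmf start)) \<le> a ^ t * F start"
proof (induction t)
  case 0
  thus ?case by simp
next
  case (Suc t)
  let ?M = "((\<lambda>M. bind_pmf M step) ^^ t) (return_pmf start)"
  have "(\<integral>\<^sup>+st. F st \<partial>bind_pmf ?M step) = (\<integral>\<^sup>+st. (\<integral>\<^sup>+st'. F st' \<partial>step st) \<partial>?M)" by simp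
  also have "\<dots> \<le> (\<integral>\<^sup>+st. a * F st \<partial>?M)"
    using funpow_bind_pmf_invariant[where I = I and step = step, OF _ inv start_inv] bound
    by (intro nn_integral_mono_AE AE_pmfI) auto
  also have "\<dots> = a * (\<integral>\<^sup>+st. F st \<partial>?M)" by (simp add: nn_integral_cmult)
  also have "\<dots> \<le> a * (a ^ t * F start)" by (intro mult_left_mono Suc.IH) simp
  finally show ?case by (simp add: mult.assoc)
qed

lemma nbrs_subset: "graph V E \<Longrightarrow> nbrs E u \<subseteq> V"
  unfolding graph_def nbrs_def by auto

lemma finite_nbrs: "graph V E \<Longrightarrow> finite (nbrs E u)"
  using nbrs_subset by (metis finite_subset graph_def)

lemma nbrs_sym: "graph V E \<Longrightarrow> v \<in> nbrs E u \<longleftrightarrow> u \<in> nbrs E v"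
  unfolding graph_def nbrs_def by auto

lemma tree_nbrs_nonempty:
  assumes T: "is_tree V E" and n: "2 \<le> card V" and u: "u \<in> V"
  shows "nbrs E u \<noteq> {}"
proof -
  obtain v where v: "v \<in> V" "v \<noteq> u"
    using n u by (metis card_le_Suc0_iff_eq not_less_eq_eq numeral_2_eq_2 card.infinite zero_le)
  then obtain q where q: "is_path V E q" "hd q = u" "last q = v"
    using T u unfolding is_tree_def by metis
  have "q \<noteq> []" using q(1) unfolding is_path_def by simp
  moreover have "hd q \<noteq> last q" using q v by simp
  ultimately have "Suc 0 < length q" by (cases q; cases "tl q") auto
  hence "E u (q ! Suc 0)" using q unfolding is_path_def by (auto simp: hd_conv_nth)
  thus ?thesis unfolding nbrs_def by auto
qed

lemma sum_deg_le_max_path_deg: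
  assumes "graph V E" "is_path V E p"
  shows "(\<Sum>w\<leftarrow>p. deg E w) \<le> max_path_deg V E"
proof -
  have "finite {p. is_path V E p}"
    using assms(1) unfolding graph_def is_path_def
    by (auto intro: finite_subset[OF _ finite_subset_distinct])
  thus ?thesis unfolding max_path_deg_def using assms(2) by (intro Max_ge) auto
qed

lemma deg_le_max_deg: "finite V \<Longrightarrow> u \<in> V \<Longrightarrow> deg E u \<le> max_deg V E"
  unfolding max_deg_def by (intro Max_ge) auto

lemma one_le_max_deg:
  assumes T: "is_tree V E" and n: "2 \<le> card V" and u: "u \<in> V"
  shows "1 \<le> max_deg V E"
proof -
  have "nbrs E u \<noteq> {}" "finite (nbrs E u)"
    using tree_nbrs_nonempty[OF T n u] finite_nbrs T unfolding is_tree_def by auto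
  hence "1 \<le> deg E u" unfolding deg_def by (simp add: Suc_le_eq card_gt_0_iff)
  thus ?thesis using deg_le_max_deg[of V u E] T u unfolding is_tree_def graph_def by simp
qed

definition last_informed :: "nat list \<Rightarrow> nat set \<Rightarrow> nat" where
  "last_informed p S = Max {i. i < length p \<and> p ! i \<in> S}"

text \<open>The weight 3 makes informing the successor of the last informed node pay for the
  neighbourhood of the new last informed node: the potential then drops by at least
  \<open>1 + 2 d(p_{j+1})\<close>.\<close>
definition path_potential :: "(nat \<Rightarrow> nat \<Rightarrow> bool) \<Rightarrow> nat list \<Rightarrow> nat set \<Rightarrow> nat" where
  "path_potential E p S =
     card (nbrs E (p ! last_informed p S) - S) + 3 * (\<Sum>i\<in>{last_informed p S<..<length p}. deg E (p ! i))"

locale graph_path =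
  fixes V E p
  assumes graph: "graph V E" and path: "is_path V E p"
begin

lemma path_nonempty: "p \<noteq> []"
  and path_distinct: "distinct p"
  and path_subset: "set p \<subseteq> V"
  and path_adj: "Suc i < length p \<Longrightarrow> E (p ! i) (p ! Suc i)"
  using path unfolding is_path_def by auto

lemma last_informed_ge: "i < length p \<Longrightarrow> p ! i \<in> S \<Longrightarrow> i \<le> last_informed p S"
  unfolding last_informed_def by (intro Max_ge) auto

lemma last_informed_mono:
  assumes "hd p \<in> S" "S \<subseteq> S'"
  shows "last_informed p S \<le> last_informed p S'"
proof -
  have "0 \<in> {i. i < length p \<and> p ! i \<in> S}"
    using assms path_nonempty by (simp add: hd_conv_nth)
  thus ?thesis unfolding last_informed_def using assms(2) by (intro Max_mono) auto
qed

lemma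
  assumes "hd p \<in> S" "last p \<notin> S"
  shows last_informed_less: "last_informed p S < length p - 1"
    and last_informed_informed: "p ! last_informed p S \<in> S"
    and beyond_last_informed_uninformed: "\<And>i. last_informed p S < i \<Longrightarrow> i < length p \<Longrightarrow> p ! i \<notin> S"
proof -
  let ?A = "{i. i < length p \<and> p ! i \<in> S}"
  have "0 \<in> ?A" using assms path_nonempty by (simp add: hd_conv_nth)
  hence mem: "last_informed p S \<in> ?A" unfolding last_informed_def by (intro Max_in) auto
  thus "p ! last_informed p S \<in> S" by simp
  show "\<And>i. last_informed p S < i \<Longrightarrow> i < length p \<Longrightarrow> p ! i \<notin> S"
    using last_informed_ge by fastforce
  have "length p - 1 \<notin> ?A" using assms path_nonempty by (simp add: last_conv_nth)
  thus "last_informed p S < length p - 1" using mem by (cases "last_informed p S = length p - 1") auto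
qed

lemma path_potential_advance:
  assumes S: "hd p \<in> S" "last p \<notin> S" and S': "S \<subseteq> S'" "last p \<notin> S'"
    and adv: "last_informed p S < last_informed p S'"
  shows "path_potential E p S' + 1 + 2 * deg E (p ! Suc (last_informed p S)) \<le> path_potential E p S"
proof -
  let ?j = "last_informed p S" and ?k = "last_informed p S'" and ?d = "\<lambda>i. deg E (p ! i)"
  have "hd p \<in> S'" using S S' by auto
  hence k: "?k < length p - 1" using last_informed_less S' by blast
  have new_nbrs: "card (nbrs E (p ! ?k) - S') \<le> ?d ?k"
    unfolding deg_def by (intro card_mono finite_nbrs[OF graph]) auto
  have "p ! Suc ?j \<in> nbrs E (p ! ?j) - S"
    using path_adj[of ?j] last_informed_less[OF S] beyond_last_informed_uninformed[OF S, of "Suc ?j"]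
    unfolding nbrs_def by auto
  hence old_nbrs: "1 \<le> card (nbrs E (p ! ?j) - S)"
    using finite_nbrs[OF graph] by (metis One_nat_def Suc_leI card_gt_0_iff empty_iff finite_Diff)
  have "{?j<..<length p} = {?j<..?k} \<union> {?k<..<length p}" using k adv by auto
  hence split: "(\<Sum>i\<in>{?j<..<length p}. ?d i) = (\<Sum>i\<in>{?j<..?k}. ?d i) + (\<Sum>i\<in>{?k<..<length p}. ?d i)"
    by (simp only:) (rule sum.union_disjoint; auto)
  have "?d ?k \<le> (\<Sum>i\<in>{?j<..?k}. ?d i)" "?d (Suc ?j) \<le> (\<Sum>i\<in>{?j<..?k}. ?d i)"
    using adv by (intro member_le_sum; simp)+
  thus ?thesis unfolding path_potential_def using new_nbrs old_nbrs split by linarith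
qed

lemma path_potential_same_last_informed:
  assumes "last_informed p S' = last_informed p S" "S \<subseteq> S'"
  shows "path_potential E p S' + card (S' \<inter> (nbrs E (p ! last_informed p S) - S)) = path_potential E p S"
proof -
  let ?N = "nbrs E (p ! last_informed p S)"
  have "?N - S = (?N - S') \<union> (S' \<inter> (?N - S))" "(?N - S') \<inter> (S' \<inter> (?N - S)) = {}"
    using assms(2) by auto
  hence "card (?N - S) = card (?N - S') + card (S' \<inter> (?N - S))"
    using finite_nbrs[OF graph] by (metis card_Un_disjoint finite_Diff finite_Int)
  thus ?thesis unfolding path_potential_def assms(1) by simp
qed

lemma path_potential_mono:
  assumes "hd p \<in> S" "last p \<notin> S" "S \<subseteq> S'" "last p \<notin> S'"
  shows "path_potential E p S' \<le> path_potential E p S"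
  using path_potential_same_last_informed[OF _ assms(3)] path_potential_advance[OF assms]
    last_informed_mono[OF assms(1,3)]
  by (cases "last_informed p S' = last_informed p S") fastforce+

lemma path_potential_serve_neighbour:
  assumes "hd p \<in> S" "last p \<notin> S" "S \<subseteq> S'" "last p \<notin> S'"
    and u: "u \<in> S'" "u \<in> nbrs E (p ! last_informed p S) - S"
  shows "path_potential E p S' + 1 \<le> path_potential E p S"
proof (cases "last_informed p S' = last_informed p S")
  case True
  have "0 < card (S' \<inter> (nbrs E (p ! last_informed p S) - S))"
    using u finite_nbrs[OF graph] by (subst card_gt_0_iff) auto
  thus ?thesis using path_potential_same_last_informed[OF True assms(3)] by linarith
next
  case False
  thus ?thesis using path_potential_advance[OF assms(1-4)] last_informed_mono[OF assms(1,3)] by simp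
qed

lemma path_potential_serve_successor:
  assumes S: "hd p \<in> S" "last p \<notin> S" and S': "S \<subseteq> S'" "last p \<notin> S'"
    and succ: "p ! Suc (last_informed p S) \<in> S'"
  shows "path_potential E p S' + 1 + 2 * deg E (p ! Suc (last_informed p S)) \<le> path_potential E p S"
proof -
  have "Suc (last_informed p S) \<le> last_informed p S'"
    using last_informed_ge[OF _ succ] last_informed_less[OF S] by auto
  thus ?thesis using path_potential_advance[OF S S'] by simp
qed

lemma path_potential_initial:
  assumes "hd p = r"
  shows "path_potential E p {r} \<le> 3 * (\<Sum>w\<leftarrow>p. deg E w)"
proof -
  have "{i. i < length p \<and> p ! i \<in> {r}} = {0}"
    using assms path_nonempty path_distinct
    by (auto simp: hd_conv_nth nth_eq_iff_index_eq)
  hence last_informed_source: "last_informed p {r} = 0" unfolding last_informed_def by simp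
  have "card (nbrs E (p ! 0) - {r}) \<le> deg E (p ! 0)"
    unfolding deg_def by (intro card_mono finite_nbrs[OF graph]) auto
  moreover have "(\<Sum>w\<leftarrow>p. deg E w) = deg E (p ! 0) + (\<Sum>i\<in>{0<..<length p}. deg E (p ! i))"
  proof -
    have "{..<length p} = insert 0 {0<..<length p}" using path_nonempty by auto
    thus ?thesis using path_nonempty by (simp add: sum_list_sum_nth atLeast0LessThan)
  qed
  ultimately show ?thesis unfolding path_potential_def last_informed_source by linarith
qed

end

definition serves_requests :: "nat set \<Rightarrow> selrule \<Rightarrow> bool" where
  "serves_requests V sel \<longleftrightarrow> (\<forall>h S N T v. T \<in> set_pmf (sel h S N) \<longrightarrow> v \<in> active V S N \<longrightarrow>
      (\<exists>u\<in>T. u \<in> req V S N v))"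

definition requests_pmf :: "nat set \<Rightarrow> (nat \<Rightarrow> nat \<Rightarrow> bool) \<Rightarrow> nat set \<Rightarrow> (nat \<Rightarrow> nat) pmf" where
  "requests_pmf V E S = Pi_pmf (V - S) 0 (\<lambda>u. pmf_of_set (nbrs E u))"

lemma serves_requests_random_sel: "finite V \<Longrightarrow> serves_requests V (random_sel V)"
  unfolding serves_requests_def random_sel_def
proof (intro allI impI)
  fix h S N T v
  assume fin: "finite V"
    and T: "T \<in> set_pmf (map_pmf (\<lambda>f. f ` active V S N)
              (Pi_pmf (active V S N) 0 (\<lambda>v. pmf_of_set (req V S N v))))"
    and v: "v \<in> active V S N"
  from T obtain f where f: "f \<in> set_pmf (Pi_pmf (active V S N) 0 (\<lambda>v. pmf_of_set (req V S N v)))"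
    and Tf: "T = f ` active V S N" by auto
  have "active V S N \<subseteq> N ` V" unfolding active_def req_def by blast
  hence "finite (active V S N)" using fin by (rule finite_subset[OF _ finite_imageI])
  hence "f v \<in> set_pmf (pmf_of_set (req V S N v))" using f v by (auto simp: set_Pi_pmf PiE_dflt_def)
  moreover have "req V S N v \<noteq> {}" "finite (req V S N v)"
    using v fin unfolding active_def req_def by auto
  ultimately show "\<exists>u\<in>T. u \<in> req V S N v" using Tf v by auto
qed

lemma serves_requests_adv_sel: "serves_requests V (adv_sel V adv)"
  unfolding serves_requests_def adv_sel_def
proof (intro allI impI)
  fix h S N T v
  assume "T \<in> set_pmf (return_pmf (adv_pick V adv h S N ` active V S N))" and v: "v \<in> active V S N"
  moreover have "adv_pick V adv h S N v \<in> req V S N v"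
    using v unfolding adv_pick_def active_def by (auto intro: someI)
  ultimately show "\<exists>u\<in>T. u \<in> req V S N v" by auto
qed

lemma rpull_step_mono: "st' \<in> set_pmf (rpull_step V E sel st) \<Longrightarrow> fst st \<subseteq> fst st'"
  unfolding rpull_step_def by (cases st) auto

lemma rpull_source_informed: "st \<in> set_pmf (rpull V E sel r t) \<Longrightarrow> r \<in> fst st"
  unfolding rpull_def
  by (erule funpow_bind_pmf_invariant[where I = "\<lambda>st. r \<in> fst st"]) (auto dest!: rpull_step_mono)

lemma request_in_nbrs:
  assumes "graph V E" "\<forall>u\<in>V. nbrs E u \<noteq> {}"
    and "N \<in> set_pmf (requests_pmf V E S)" "u \<in> V - S"
  shows "N u \<in> nbrs E u"
proof -
  have "finite V" using assms(1) unfolding graph_def by simp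
  hence "N u \<in> set_pmf (pmf_of_set (nbrs E u))"
    using assms(3,4) unfolding requests_pmf_def by (auto simp: set_Pi_pmf PiE_dflt_def)
  thus ?thesis using assms(1,2,4) finite_nbrs by auto
qed

lemma requester_served:
  assumes graph: "graph V E" and nne: "\<forall>u\<in>V. nbrs E u \<noteq> {}" and sel: "serves_requests V sel"
    and N: "N \<in> set_pmf (requests_pmf V E S)" and T: "T \<in> set_pmf (sel h S N)"
    and a: "a \<in> S" and w: "w \<in> V - S" "N w = a"
  shows "\<exists>u\<in>T. u \<in> V - S \<and> u \<in> nbrs E a \<and> N u = a"
proof -
  have "a \<in> active V S N" using a w unfolding active_def req_def by auto
  then obtain u where u: "u \<in> T" "u \<in> req V S N a"
    using sel T unfolding serves_requests_def by blast
  hence "u \<in> V - S" "N u = a" unfolding req_def by auto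
  moreover have "u \<in> nbrs E a"
    using request_in_nbrs[OF graph nne N \<open>u \<in> V - S\<close>] \<open>N u = a\<close> nbrs_sym[OF graph] by auto
  ultimately show ?thesis using u by auto
qed

text \<open>Zero once the target \<open>last p\<close> is informed.  The source \<open>hd p\<close> stays informed, so the
  second case never arises; it only keeps \<open>last_informed p S\<close> meaningful.\<close>
definition exp_potential :: "(nat \<Rightarrow> nat \<Rightarrow> bool) \<Rightarrow> nat list \<Rightarrow> real \<Rightarrow> nat set \<Rightarrow> ennreal" where
  "exp_potential E p lam S =
     (if last p \<in> S \<or> hd p \<notin> S then 0 else ennreal (exp (lam * real (path_potential E p S))))"

text \<open>The factor by which the exponential potential shrinks in a round with requests \<open>N\<close>,
  when \<open>a\<close> is the last informed node of the path and \<open>b\<close> its successor.\<close>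
definition round_factor ::
    "(nat \<Rightarrow> nat \<Rightarrow> bool) \<Rightarrow> real \<Rightarrow> nat set \<Rightarrow> nat \<Rightarrow> nat \<Rightarrow> (nat \<Rightarrow> nat) \<Rightarrow> real" where
  "round_factor E lam S a b N =
     (if \<exists>w\<in>nbrs E a - S - {b}. N w = a then exp (- lam)
      else if N b = a then exp (- lam * real (1 + 2 * deg E b)) else 1)"

lemma nn_integral_request_factor_le:
  assumes graph: "graph V E" and ab: "E a b" and lam: "0 < lam"
    and deg_b: "2 * lam * real (deg E b) \<le> 1"
  shows "(\<integral>\<^sup>+y. ennreal (if y = a then exp (- lam * real (1 + 2 * deg E b)) else 1)
            \<partial>pmf_of_set (nbrs E b)) \<le> ennreal (exp (- lam))"
proof -
  define d where "d = real (deg E b)"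
  define e where "e = exp (- lam * real (1 + 2 * deg E b))"
  have fin: "finite (nbrs E b)" using finite_nbrs[OF graph] .
  have a: "a \<in> nbrs E b" using ab nbrs_sym[OF graph] unfolding nbrs_def by auto
  hence d: "1 \<le> d" unfolding d_def deg_def using fin
    by (metis One_nat_def Suc_leI card_gt_0_iff empty_iff of_nat_1 of_nat_mono)
  have "(\<Sum>y\<in>nbrs E b. if y = a then e else 1) = (\<Sum>y\<in>nbrs E b. (if y = a then e - 1 else 0) + 1)"
    by (intro sum.cong) auto
  also have "\<dots> = e + (d - 1)" using a fin by (simp add: sum.distrib d_def deg_def)
  finally have sum: "(\<Sum>y\<in>nbrs E b. if y = a then e else 1) = e + (d - 1)" .
  have "(\<integral>\<^sup>+y. ennreal (if y = a then e else 1) \<partial>pmf_of_set (nbrs E b))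
          = (\<Sum>y\<in>nbrs E b. ennreal (if y = a then e else 1)) / of_nat (card (nbrs E b))"
    using a fin by (intro nn_integral_pmf_of_set) auto
  also have "\<dots> = ennreal (e + (d - 1)) / ennreal d"
    unfolding sum[symmetric]
    by (subst sum_ennreal) (auto simp: e_def d_def deg_def ennreal_of_nat_eq_real_of_nat)
  also have "\<dots> = ennreal ((e + (d - 1)) / d)"
    using d by (intro divide_ennreal) (auto simp: e_def)
  also have "\<dots> \<le> ennreal (exp (- lam))"
    using average_exp_neg_le[OF lam d] deg_b unfolding e_def d_def by (intro ennreal_leI) simp
  finally show ?thesis unfolding e_def .
qed

text \<open>Only the request of \<open>b\<close> matters when no other neighbour of \<open>a\<close> requests \<open>a\<close>.\<close>
lemma nn_integral_round_factor_le:
  assumes graph: "graph V E" and lam: "0 < lam"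
    and b: "b \<in> V - S" and ab: "E a b" and deg_b: "2 * lam * real (deg E b) \<le> 1"
  shows "(\<integral>\<^sup>+N. ennreal (round_factor E lam S a b N) \<partial>requests_pmf V E S) \<le> ennreal (exp (- lam))"
proof -
  define Q where "Q = (\<lambda>u. pmf_of_set (nbrs E u))"
  define A where "A = V - S - {b}"
  define R where "R = (\<lambda>N. ennreal (round_factor E lam S a b N))"
  have "V - S = insert b A" "b \<notin> A" "finite A"
    using b graph unfolding A_def graph_def by auto
  hence split: "requests_pmf V E S = map_pmf (\<lambda>(y, f). f(b := y)) (pair_pmf (Q b) (Pi_pmf A 0 Q))"
    unfolding requests_pmf_def Q_def by (simp add: Pi_pmf_insert)
  have inner: "(\<integral>\<^sup>+y. R (f(b := y)) \<partial>Q b) \<le> ennreal (exp (- lam))" for f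
  proof (cases "\<exists>w\<in>nbrs E a - S - {b}. f w = a")
    case True
    thus ?thesis unfolding R_def round_factor_def by simp
  next
    case False
    thus ?thesis
      using nn_integral_request_factor_le[OF graph ab lam deg_b]
      unfolding R_def round_factor_def Q_def by simp
  qed
  have "(\<integral>\<^sup>+N. R N \<partial>requests_pmf V E S) = (\<integral>\<^sup>+f. \<integral>\<^sup>+y. R (f(b := y)) \<partial>Q b \<partial>Pi_pmf A 0 Q)"
    unfolding split by (subst pair_commute_pmf) (simp add: nn_integral_pair_pmf')
  also have "\<dots> \<le> (\<integral>\<^sup>+f. ennreal (exp (- lam)) \<partial>Pi_pmf A 0 Q)"
    by (intro nn_integral_mono inner)
  finally show ?thesis unfolding R_def by simp
qed

context graph_path
begin

lemma exp_potential_le: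
  assumes lam: "0 \<le> lam" and S: "hd p \<in> S" "last p \<notin> S" "S \<subseteq> S'"
    and drop: "last p \<notin> S' \<Longrightarrow> path_potential E p S' + k \<le> path_potential E p S"
  shows "exp_potential E p lam S' \<le> exp_potential E p lam S * ennreal (exp (- lam * real k))"
proof (cases "last p \<in> S'")
  case True
  thus ?thesis unfolding exp_potential_def by simp
next
  case False
  have "real (path_potential E p S') \<le> real (path_potential E p S) - real k"
    using drop[OF False] by linarith
  hence "lam * real (path_potential E p S') \<le> lam * real (path_potential E p S) + (- lam * real k)"
    using mult_left_mono[OF _ lam] by (fastforce simp: algebra_simps)
  hence "exp (lam * real (path_potential E p S'))
           \<le> exp (lam * real (path_potential E p S)) * exp (- lam * real k)"
    by (simp add: exp_add[symmetric])
  thus ?thesis using False S unfolding exp_potential_def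
    by (auto simp: ennreal_mult[symmetric] intro!: ennreal_leI)
qed

lemma exp_potential_round:
  assumes nne: "\<forall>u\<in>V. nbrs E u \<noteq> {}" and sel: "serves_requests V sel" and lam: "0 < lam"
    and S: "hd p \<in> S" "last p \<notin> S"
    and N: "N \<in> set_pmf (requests_pmf V E S)" and T: "T \<in> set_pmf (sel h S N)"
  shows "exp_potential E p lam (S \<union> T)
           \<le> exp_potential E p lam S * ennreal (round_factor E lam S (p ! last_informed p S)
                                                  (p ! Suc (last_informed p S)) N)"
proof -
  define a where "a = p ! last_informed p S"
  define b where "b = p ! Suc (last_informed p S)"
  have a: "a \<in> S" unfolding a_def using last_informed_informed[OF S] .
  have b: "b \<in> V - S"
    using last_informed_less[OF S] beyond_last_informed_uninformed[OF S] path_subset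
    unfolding b_def by auto
  have served: "\<exists>u\<in>T. u \<in> V - S \<and> u \<in> nbrs E a \<and> N u = a" if "w \<in> V - S" "N w = a" for w
    using requester_served[OF graph nne sel N T a that] .
  consider (neighbour) w where "w \<in> nbrs E a - S - {b}" "N w = a"
    | (successor) "\<not> (\<exists>w\<in>nbrs E a - S - {b}. N w = a)" "N b = a"
    | (idle) "\<not> (\<exists>w\<in>nbrs E a - S - {b}. N w = a)" "N b \<noteq> a"
    by blast
  thus ?thesis
  proof cases
    case neighbour
    then obtain u where "u \<in> T" "u \<in> nbrs E a - S"
      using served[of w] nbrs_subset[OF graph] by blast
    hence "exp_potential E p lam (S \<union> T) \<le> exp_potential E p lam S * ennreal (exp (- lam * real 1))"
      using path_potential_serve_neighbour[OF S, of "S \<union> T" u] lam S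
      by (intro exp_potential_le) (auto simp: a_def)
    thus ?thesis using neighbour unfolding round_factor_def a_def b_def by auto
  next
    case successor
    then obtain u where "u \<in> T" "u \<in> nbrs E a - S" "N u = a" using served[of b] b by blast
    hence "b \<in> S \<union> T" using successor by (cases "u = b") auto
    hence "exp_potential E p lam (S \<union> T)
             \<le> exp_potential E p lam S * ennreal (exp (- lam * real (1 + 2 * deg E b)))"
      using path_potential_serve_successor[OF S, of "S \<union> T"] lam S
      by (intro exp_potential_le) (auto simp: b_def)
    thus ?thesis using successor unfolding round_factor_def a_def b_def by simp
  next
    case idle
    have "exp_potential E p lam (S \<union> T) \<le> exp_potential E p lam S * ennreal (exp (- lam * real 0))"
      using path_potential_mono[OF S, of "S \<union> T"] lam S by (intro exp_potential_le) auto
    thus ?thesis using idle unfolding round_factor_def a_def b_def by simp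
  qed
qed

lemma exp_potential_step:
  assumes nne: "\<forall>u\<in>V. nbrs E u \<noteq> {}" and sel: "serves_requests V sel" and lam: "0 < lam"
    and deg: "\<And>v. v \<in> set p \<Longrightarrow> 2 * lam * real (deg E v) \<le> 1"
    and S: "hd p \<in> S" "last p \<notin> S"
  shows "(\<integral>\<^sup>+st. exp_potential E p lam (fst st) \<partial>rpull_step V E sel (S, h))
           \<le> ennreal (exp (- lam)) * exp_potential E p lam S"
proof -
  let ?j = "last_informed p S"
  let ?R = "\<lambda>N. ennreal (round_factor E lam S (p ! ?j) (p ! Suc ?j) N)"
  have j: "Suc ?j < length p" using last_informed_less[OF S] by simp
  have "(\<integral>\<^sup>+st. exp_potential E p lam (fst st) \<partial>rpull_step V E sel (S, h))
          = (\<integral>\<^sup>+N. \<integral>\<^sup>+T. exp_potential E p lam (S \<union> T) \<partial>sel (h @ [N]) S N \<partial>requests_pmf V E S)"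
    unfolding rpull_step_def requests_pmf_def by simp
  also have "\<dots> \<le> (\<integral>\<^sup>+N. exp_potential E p lam S * ?R N \<partial>requests_pmf V E S)"
  proof (intro nn_integral_mono_AE AE_pmfI)
    fix N assume N: "N \<in> set_pmf (requests_pmf V E S)"
    have "(\<integral>\<^sup>+T. exp_potential E p lam (S \<union> T) \<partial>sel (h @ [N]) S N)
            \<le> (\<integral>\<^sup>+T. exp_potential E p lam S * ?R N \<partial>sel (h @ [N]) S N)"
      by (intro nn_integral_mono_AE AE_pmfI exp_potential_round[OF nne sel lam S N])
    thus "(\<integral>\<^sup>+T. exp_potential E p lam (S \<union> T) \<partial>sel (h @ [N]) S N) \<le> exp_potential E p lam S * ?R N"
      by simp
  qed
  also have "\<dots> = exp_potential E p lam S * (\<integral>\<^sup>+N. ?R N \<partial>requests_pmf V E S)"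
    by (simp add: nn_integral_cmult)
  also have "\<dots> \<le> exp_potential E p lam S * ennreal (exp (- lam))"
  proof (intro mult_left_mono)
    have "p ! Suc ?j \<in> V - S"
      using beyond_last_informed_uninformed[OF S, of "Suc ?j"] path_subset j by auto
    thus "(\<integral>\<^sup>+N. ?R N \<partial>requests_pmf V E S) \<le> ennreal (exp (- lam))"
      using j by (intro nn_integral_round_factor_le[OF graph lam _ path_adj[OF j]] deg) simp_all
  qed simp
  finally show ?thesis by (simp add: mult.commute)
qed

lemma exp_potential_supermartingale:
  assumes nne: "\<forall>u\<in>V. nbrs E u \<noteq> {}" and sel: "serves_requests V sel" and lam: "0 < lam"
    and deg: "\<And>v. v \<in> set p \<Longrightarrow> 2 * lam * real (deg E v) \<le> 1"
    and hd: "hd p \<in> fst st"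
  shows "(\<integral>\<^sup>+st'. exp_potential E p lam (fst st') \<partial>rpull_step V E sel st)
           \<le> ennreal (exp (- lam)) * exp_potential E p lam (fst st)"
proof (cases st)
  case (Pair S h)
  show ?thesis
  proof (cases "last p \<in> S")
    case True
    have "S \<subseteq> fst st'" if "st' \<in> set_pmf (rpull_step V E sel st)" for st'
      using rpull_step_mono[OF that] Pair by simp
    hence "(\<integral>\<^sup>+st'. exp_potential E p lam (fst st') \<partial>rpull_step V E sel st) = 0"
      using True unfolding Pair exp_potential_def
      by (subst nn_integral_0_iff_AE) (auto intro!: AE_pmfI)
    thus ?thesis by simp
  next
    case False
    thus ?thesis using exp_potential_step[OF nne sel lam deg] hd by (simp add: Pair)
  qed
qed

end

lemma prob_uninformed_le:
  assumes T: "is_tree V E" and n: "2 \<le> card V" and r: "r \<in> V" and x: "x \<in> V"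
    and sel: "serves_requests V sel" and lam: "0 < lam" and deg: "2 * lam * real (max_deg V E) \<le> 1"
  shows "measure_pmf.prob (rpull V E sel r t) {st. x \<notin> fst st}
           \<le> exp (lam * (3 * real (max_path_deg V E) - real t))"
proof (cases "x = r")
  case True
  hence "measure_pmf.prob (rpull V E sel r t) {st. x \<notin> fst st} = 0"
    using rpull_source_informed by (auto simp: measure_pmf_zero_iff)
  thus ?thesis by simp
next
  case False
  obtain p where p: "is_path V E p" "hd p = r" "last p = x"
    using T r x unfolding is_tree_def by metis
  have graph: "graph V E" using T unfolding is_tree_def by simp
  interpret graph_path V E p using graph p(1) by unfold_locales
  have nne: "\<forall>u\<in>V. nbrs E u \<noteq> {}" using tree_nbrs_nonempty[OF T n] by auto
  have deg_p: "2 * lam * real (deg E v) \<le> 1" if "v \<in> set p" for v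
    using that path_subset deg_le_max_deg[of V v E] graph deg lam unfolding graph_def
    by (smt (verit, best) mult_left_mono of_nat_mono subsetD)
  let ?F = "\<lambda>st :: nat set \<times> (nat \<Rightarrow> nat) list. exp_potential E p lam (fst st)"
  have invariant: "r \<in> fst st'" if "r \<in> fst st" "st' \<in> set_pmf (rpull_step V E sel st)" for st st'
    using rpull_step_mono[OF that(2)] that(1) by blast
  have decay: "(\<integral>\<^sup>+st'. ?F st' \<partial>rpull_step V E sel st) \<le> ennreal (exp (- lam)) * ?F st"
    if "r \<in> fst st" for st
    using exp_potential_supermartingale[OF nne sel lam deg_p] that p(2) by simp
  have "emeasure (rpull V E sel r t) {st. x \<notin> fst st}
          = (\<integral>\<^sup>+st. indicator {st. x \<notin> fst st} st \<partial>rpull V E sel r t)"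
    by simp
  also have "\<dots> \<le> (\<integral>\<^sup>+st. ?F st \<partial>rpull V E sel r t)"
    using rpull_source_informed[of _ V E sel r t] p lam
    by (intro nn_integral_mono_AE AE_pmfI) (auto simp: exp_potential_def indicator_def)
  also have "\<dots> \<le> ennreal (exp (- lam)) ^ t * ?F ({r}, [])"
    unfolding rpull_def
    by (rule nn_integral_funpow_bind_pmf_le[where I = "\<lambda>st. r \<in> fst st"]) (use invariant decay in auto)
  also have "\<dots> = ennreal (exp (real t * - lam) * exp (lam * real (path_potential E p {r})))"
    using p False exp_of_nat_mult[of t "- lam"]
    by (simp add: exp_potential_def ennreal_power ennreal_mult)
  also have "\<dots> = ennreal (exp (lam * (real (path_potential E p {r}) - real t)))"
    by (simp add: exp_add[symmetric] algebra_simps)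
  also have "\<dots> \<le> ennreal (exp (lam * (3 * real (max_path_deg V E) - real t)))"
    using path_potential_initial[OF p(2)] sum_deg_le_max_path_deg[OF graph p(1)] lam
    by (intro ennreal_leI) (simp add: mult_left_mono)
  finally show ?thesis by (simp add: measure_pmf.emeasure_eq_measure)
qed

lemma all_informed_prob_eq:
  "all_informed_prob V E sel r t = 1 - measure_pmf.prob (rpull V E sel r t) (\<Union>x\<in>V. {st. x \<notin> fst st})"
proof -
  have "{st. V \<subseteq> fst st} = space (rpull V E sel r t) - (\<Union>x\<in>V. {st. x \<notin> fst st})" by auto
  thus ?thesis unfolding all_informed_prob_def by (simp only:) (rule measure_pmf.prob_compl, simp)
qed

lemma all_informed_prob_ge:
  assumes T: "is_tree V E" and r: "r \<in> V" and sel: "serves_requests V sel"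
    and t: "4 * (real (max_path_deg V E) + real (max_deg V E) * ln (real (card V))) \<le> real t"
  shows "1 - real (card V) powr (- 1) \<le> all_informed_prob V E sel r t"
proof (cases "card V = 1")
  case True
  thus ?thesis unfolding all_informed_prob_def by simp
next
  case False
  define n where "n = real (card V)"
  define \<Delta> where "\<Delta> = real (max_deg V E)"
  define M where "M = rpull V E sel r t"
  have finV: "finite V" using T unfolding is_tree_def graph_def by simp
  with False r have card: "2 \<le> card V" by (cases "card V") (auto simp: card_gt_0_iff)
  hence n: "2 \<le> n" unfolding n_def by simp
  have \<Delta>: "1 \<le> \<Delta>" using one_le_max_deg[OF T card r] unfolding \<Delta>_def by simp
  have uninformed: "measure_pmf.prob M {st. x \<notin> fst st} \<le> 1 / n ^ 2" if "x \<in> V" for x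
  proof -
    have "measure_pmf.prob M {st. x \<notin> fst st}
            \<le> exp (1 / (2 * \<Delta>) * (3 * real (max_path_deg V E) - real t))"
      unfolding M_def using \<Delta> by (intro prob_uninformed_le[OF T card r that sel]) (auto simp: \<Delta>_def)
    also have "\<dots> \<le> 1 / n ^ 2"
      using exp_decay_le_inverse_square[of \<Delta> "real (max_path_deg V E)" n "real t"] \<Delta> n t
      unfolding n_def \<Delta>_def by simp
    finally show ?thesis .
  qed
  have "measure_pmf.prob M (\<Union>x\<in>V. {st. x \<notin> fst st}) \<le> (\<Sum>x\<in>V. measure_pmf.prob M {st. x \<notin> fst st})"
    by (rule measure_pmf.finite_measure_subadditive_finite[OF finV]) auto
  also have "\<dots> \<le> n * (1 / n ^ 2)" using uninformed sum_mono[of V _ "\<lambda>_. 1 / n ^ 2"]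
    unfolding n_def by fastforce
  also have "\<dots> = n powr (- 1)" using n by (simp add: powr_minus_divide power2_eq_square)
  finally have "measure_pmf.prob M (\<Union>x\<in>V. {st. x \<notin> fst st}) \<le> n powr (- 1)" .
  thus ?thesis unfolding all_informed_prob_eq M_def[symmetric] n_def by simp
qed

theorem lemma2:
  "\<exists>C::real. C > 0 \<and> (\<exists>c::real. c \<ge> 1 \<and>
     (\<forall>V E r t. is_tree V E \<longrightarrow> r \<in> V \<longrightarrow>
        real t \<ge> C * (real (max_path_deg V E) + real (max_deg V E) * ln (real (card V))) \<longrightarrow>
          all_informed_prob V E (random_sel V) r t \<ge> 1 - real (card V) powr (- c)
        \<and> (\<forall>adv. all_informed_prob V E (adv_sel V adv) r t \<ge> 1 - real (card V) powr (- c))))"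
proof (rule exI[of _ 4], intro conjI exI[of _ 1] allI impI)
  fix V E r t
  assume T: "is_tree V E" and r: "r \<in> V"
    and t: "4 * (real (max_path_deg V E) + real (max_deg V E) * ln (real (card V))) \<le> real t"
  have "finite V" using T unfolding is_tree_def graph_def by simp
  thus "1 - real (card V) powr (- 1) \<le> all_informed_prob V E (random_sel V) r t"
    by (intro all_informed_prob_ge[OF T r serves_requests_random_sel t])
  show "1 - real (card V) powr (- 1) \<le> all_informed_prob V E (adv_sel V adv) r t" for adv
    by (intro all_informed_prob_ge[OF T r serves_requests_adv_sel t])
qed simp_all

end
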